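(* Let $X$ be an infinite-dimensional complex Banach space, and let $(S(z))_{z\in\mathbb{C}}$ be an entire $C$-regularized group on $X$ with $C$ of dense range. Let $x\in X$ be a supercyclic vector for $\{S(z):z\in\mathbb{C}\}$. Then: (1) $S(z)x\neq0$ for all $z\in\mathbb{C}$; (2) for every $\omega_0\in\mathbb{C}$, the set $\{\alpha S(z)x:\alpha,z\in\mathbb{C},\ |z|>|\omega_0|\}$ is dense in $X$.
   Context: An entire $C$-regularized group is a family $(S(z))_{z\in\mathbb{C}}$ of bounded operators on $X$ satisfying three conditions: $S(0)=C$; $S(z+w)C=S(z)S(w)$ for all $z,w\in\mathbb{C}$; and $z\mapsto S(z)x$ is entire for every $x\in X$. A vector $x$ is supercyclic for $\{S(z):z\in\mathbb{C}\}$ if $\{\alpha S(z)x:\alpha,z\in\mathbb{C}\}$ is dense in $X$. *)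

theory Defs
  imports "HOL-Analysis.Analysis"
begin

text \<open>A complex Banach space is modelled as a real Banach space (type class banach)
  together with a complex scalar multiplication cs compatible with the real one
  and with the norm.\<close>
definition complex_scalar :: "(complex \<Rightarrow> 'a::banach \<Rightarrow> 'a) \<Rightarrow> bool" where
  "complex_scalar cs \<longleftrightarrow>
     (\<forall>r x. cs (complex_of_real r) x = r *\<^sub>R x) \<and>
     (\<forall>a b x. cs (a * b) x = cs a (cs b x)) \<and>
     (\<forall>a b x. cs (a + b) x = cs a x + cs b x) \<and>
     (\<forall>a x y. cs a (x + y) = cs a x + cs a y) \<and>
     (\<forall>a x. norm (cs a x) = cmod a * norm x)"

definition infinite_dim_c :: "(complex \<Rightarrow> 'a::banach \<Rightarrow> 'a) \<Rightarrow> bool" where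
  "infinite_dim_c cs \<longleftrightarrow>
     \<not> (\<exists>B. finite B \<and> (\<forall>x. \<exists>c. x = (\<Sum>b\<in>B. cs (c b) b)))"

definition bounded_clinear_op :: "(complex \<Rightarrow> 'a::banach \<Rightarrow> 'a) \<Rightarrow> ('a \<Rightarrow> 'a) \<Rightarrow> bool" where
  "bounded_clinear_op cs T \<longleftrightarrow> bounded_linear T \<and> (\<forall>a x. T (cs a x) = cs a (T x))"

definition cdifferentiable_at :: "(complex \<Rightarrow> 'a::banach \<Rightarrow> 'a) \<Rightarrow> (complex \<Rightarrow> 'a) \<Rightarrow> complex \<Rightarrow> bool" where
  "cdifferentiable_at cs f z0 \<longleftrightarrow>
     (\<exists>v. ((\<lambda>h. cs (inverse h) (f (z0 + h) - f z0)) \<longlongrightarrow> v) (at 0))"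

definition entire_v :: "(complex \<Rightarrow> 'a::banach \<Rightarrow> 'a) \<Rightarrow> (complex \<Rightarrow> 'a) \<Rightarrow> bool" where
  "entire_v cs f \<longleftrightarrow> (\<forall>z. cdifferentiable_at cs f z)"

definition entire_C_reg_group ::
  "(complex \<Rightarrow> 'a::banach \<Rightarrow> 'a) \<Rightarrow> ('a \<Rightarrow> 'a) \<Rightarrow> (complex \<Rightarrow> 'a \<Rightarrow> 'a) \<Rightarrow> bool" where
  "entire_C_reg_group cs C S \<longleftrightarrow>
     bounded_clinear_op cs C \<and> (\<forall>z. bounded_clinear_op cs (S z)) \<and>
     S 0 = C \<and>
     (\<forall>z w. S (z + w) \<circ> C = S z \<circ> S w) \<and>
     (\<forall>x. entire_v cs (\<lambda>z. S z x))"

definition supercyclic_vec ::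
  "(complex \<Rightarrow> 'a::banach \<Rightarrow> 'a) \<Rightarrow> (complex \<Rightarrow> 'a \<Rightarrow> 'a) \<Rightarrow> 'a \<Rightarrow> bool" where
  "supercyclic_vec cs S x \<longleftrightarrow> closure {cs \<alpha> (S z x) | \<alpha> z. True} = UNIV"

end

theory Submission
  imports Defs
begin

text \<open>Suppose \<open>S z\<^sub>0 x = 0\<close>. The group law gives \<open>S u (C x) = S (u - z\<^sub>0) (S z\<^sub>0 x) = 0\<close>,
  and \<open>C\<close> commutes with every \<open>S u\<close>, so \<open>C\<close> vanishes on the projective orbit of \<open>x\<close>, which is
  dense; then \<open>C = 0\<close>, contradicting the density of its range.

  For the second claim, split the projective orbit at \<open>|z| = |\<omega>\<^sub>0|\<close>. The part over the compact
  disc \<open>|z| \<le> |\<omega>\<^sub>0|\<close> is a cone over the compact curve \<open>S z x\<close>, which avoids \<open>0\<close> by the first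
  claim; hence its bounded pieces lie in compact sets, and a ball inside its closure would be
  compact, which Riesz's theorem forbids in infinite dimension. So its closure is nowhere dense,
  and the remaining part must be dense.\<close>

lemma complex_scalar_bounded_bilinear:
  assumes "complex_scalar cs"
  shows "bounded_bilinear cs"
proof -
  note cs = assms[unfolded complex_scalar_def]
  show ?thesis
  proof
    fix a a' :: complex and b b' :: 'a and r :: real
    show "cs (a + a') b = cs a b + cs a' b" using cs by blast
    show "cs a (b + b') = cs a b + cs a b'" using cs by blast
    show "cs (r *\<^sub>R a) b = r *\<^sub>R cs a b"
      using cs by (metis scaleR_conv_of_real)
    have "cs a (r *\<^sub>R b) = cs (complex_of_real r * a) b" using cs by (metis mult.commute)
    also have "\<dots> = r *\<^sub>R cs a b" using cs by metis
    finally show "cs a (r *\<^sub>R b) = r *\<^sub>R cs a b" .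
    show "\<exists>K. \<forall>a b. norm (cs a b) \<le> norm a * norm b * K"
      using cs by (intro exI[of _ 1]) simp
  qed
qed

lemma complex_scalar_norm: "complex_scalar cs \<Longrightarrow> norm (cs a v) = cmod a * norm v"
  unfolding complex_scalar_def by blast

lemma complex_scalar_inverse_cancel:
  assumes "complex_scalar cs" and "h \<noteq> 0"
  shows "cs h (cs (inverse h) v) = v"
proof -
  have "cs h (cs (inverse h) v) = cs 1 v"
    using assms unfolding complex_scalar_def by (metis right_inverse)
  also have "\<dots> = v"
    using assms(1) unfolding complex_scalar_def by (metis of_real_1 scaleR_one)
  finally show ?thesis .
qed

lemma entire_v_continuous:
  assumes cs: "complex_scalar cs" and "entire_v cs f"
  shows "continuous_on UNIV f"
proof (rule continuous_at_imp_continuous_on, intro ballI)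
  fix z0 :: complex
  interpret cs: bounded_bilinear cs by (rule complex_scalar_bounded_bilinear[OF cs])
  define q where "q h = cs (inverse h) (f (z0 + h) - f z0)" for h
  obtain v where "(q \<longlongrightarrow> v) (at 0)"
    using assms(2) unfolding entire_v_def cdifferentiable_at_def q_def by blast
  then have "((\<lambda>h. cs h (q h)) \<longlongrightarrow> cs 0 v) (at 0)"
    by (rule cs.tendsto[OF tendsto_ident_at])
  moreover have "\<forall>\<^sub>F h in at 0. cs h (q h) = f (z0 + h) - f z0"
    unfolding q_def eventually_at_filter
    by (intro always_eventually allI impI complex_scalar_inverse_cancel[OF cs])
  ultimately have "((\<lambda>h. f (z0 + h) - f z0) \<longlongrightarrow> 0) (at 0)"
    by (simp add: cs.zero_left Lim_transform_eventually)
  then have "((\<lambda>h. f (z0 + h)) \<longlongrightarrow> f z0) (at 0)"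
    by (rule LIM_zero_cancel)
  then show "isCont f z0"
    by (simp add: isCont_def LIM_offset_zero_iff[symmetric])
qed

lemma closed_span_finite:
  fixes B :: "'a::real_normed_vector set"
  assumes "finite B"
  shows "closed (span B)"
  using assms
proof (induction B rule: finite_induct)
  case empty
  then show ?case by simp
next
  case (insert b B)
  show ?case
  proof (cases "b \<in> span B")
    case True
    then show ?thesis using insert by (simp add: span_redundant)
  next
    case False
    define \<delta> where "\<delta> = infdist b (span B)"
    have "\<delta> > 0" unfolding \<delta>_def
      using insert.IH False span_zero[of B]
      by (metis empty_iff in_closed_iff_infdist_zero infdist_nonneg order_le_less)
    have coeff_bound: "\<bar>t\<bar> * \<delta> \<le> norm (t *\<^sub>R b + v)" if "v \<in> span B" for t v
    proof (cases "t = 0")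
      case False
      have "- ((1/t) *\<^sub>R v) \<in> span B" using that by (simp add: span_neg span_scale)
      then have "\<delta> \<le> dist b (- ((1/t) *\<^sub>R v))"
        unfolding \<delta>_def by (rule infdist_le)
      also have "\<dots> = norm (b + (1/t) *\<^sub>R v)" by (simp add: dist_norm)
      finally have "\<bar>t\<bar> * \<delta> \<le> \<bar>t\<bar> * norm (b + (1/t) *\<^sub>R v)"
        by (simp add: mult_left_mono)
      also have "\<dots> = norm (t *\<^sub>R (b + (1/t) *\<^sub>R v))" by simp
      also have "t *\<^sub>R (b + (1/t) *\<^sub>R v) = t *\<^sub>R b + v" using False
        by (simp add: scaleR_add_right)
      finally show ?thesis .
    qed simp
    show ?thesis unfolding closed_sequential_limits
    proof (intro allI impI, elim conjE)
      fix s l assume "\<forall>n. s n \<in> span (insert b B)" and "s \<longlonglongrightarrow> l"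
      then have "\<forall>n. \<exists>k. s n - k *\<^sub>R b \<in> span B" by (simp add: span_insert)
      then obtain t where "\<And>n. s n - t n *\<^sub>R b \<in> span B" by metis
      define v where "v n = s n - t n *\<^sub>R b" for n
      have v: "v n \<in> span B" for n using \<open>\<And>n. s n - t n *\<^sub>R b \<in> span B\<close> v_def by simp
      have "Cauchy s" using \<open>s \<longlonglongrightarrow> l\<close> by (rule LIMSEQ_imp_Cauchy)
      have "Cauchy t"
      proof (rule metric_CauchyI)
        fix e :: real assume "e > 0"
        then obtain M where M: "\<And>m n. m \<ge> M \<Longrightarrow> n \<ge> M \<Longrightarrow> dist (s m) (s n) < e * \<delta>"
          using \<open>Cauchy s\<close> \<open>\<delta> > 0\<close> unfolding Cauchy_def by (metis mult_pos_pos)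
        show "\<exists>M. \<forall>m\<ge>M. \<forall>n\<ge>M. dist (t m) (t n) < e"
        proof (intro exI allI impI)
          fix m n assume "m \<ge> M" "n \<ge> M"
          have "v m - v n \<in> span B" using v by (simp add: span_diff)
          then have "\<bar>t m - t n\<bar> * \<delta> \<le> norm ((t m - t n) *\<^sub>R b + (v m - v n))"
            by (rule coeff_bound)
          also have "(t m - t n) *\<^sub>R b + (v m - v n) = s m - s n"
            by (simp add: v_def algebra_simps)
          also have "norm (s m - s n) < e * \<delta>"
            using M[OF \<open>m \<ge> M\<close> \<open>n \<ge> M\<close>] by (simp add: dist_norm)
          finally show "dist (t m) (t n) < e" using \<open>\<delta> > 0\<close> by (simp add: dist_real_def)
        qed
      qed
      then obtain t0 where "t \<longlonglongrightarrow> t0" using Cauchy_convergent_iff convergent_def by blast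
      then have "v \<longlonglongrightarrow> l - t0 *\<^sub>R b"
        unfolding v_def using \<open>s \<longlonglongrightarrow> l\<close> by (intro tendsto_intros)
      then have "l - t0 *\<^sub>R b \<in> span B"
        using insert.IH v closed_sequentially by blast
      then show "l \<in> span (insert b B)" by (auto simp: span_insert)
    qed
  qed
qed

text \<open>Inductive step: rescale the error by \<open>2\<^sup>n\<close> into the unit ball and approximate it
  again by a point of the net.\<close>

lemma half_net_approximates_unit_ball:
  fixes B :: "'a::real_normed_vector set"
  assumes net: "cball 0 1 \<subseteq> (\<Union>b\<in>B. ball b (1/2))" and x: "norm x \<le> 1"
  shows "\<exists>v\<in>span B. norm (x - v) \<le> (1/2)^n"
proof (induction n)
  case 0
  show ?case using x span_zero[of B] by force
next
  case (Suc n)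
  then obtain v where v: "v \<in> span B" "norm (x - v) \<le> (1/2)^n" by blast
  define w where "w = (2^n) *\<^sub>R (x - v)"
  have "norm w \<le> 2^n * (1/2)^n"
    using v(2) unfolding w_def by (simp add: mult_left_mono)
  then have "w \<in> cball 0 1" by (simp add: power_one_over)
  then obtain b where b: "b \<in> B" "norm (w - b) < 1/2"
    using net by (auto simp: dist_norm norm_minus_commute)
  have "x - (v + (1/2)^n *\<^sub>R b) = (1/2)^n *\<^sub>R (w - b)"
    by (simp add: w_def algebra_simps power_one_over)
  then have "norm (x - (v + (1/2)^n *\<^sub>R b)) \<le> (1/2)^Suc n"
    using b(2) by (simp add: mult_left_mono)
  moreover have "v + (1/2)^n *\<^sub>R b \<in> span B"
    by (intro span_add v(1) span_scale span_base b(1))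
  ultimately show ?case by blast
qed

lemma finite_span_UNIV_if_compact_unit_ball:
  assumes "compact (cball (0::'a::real_normed_vector) 1)"
  obtains B where "finite B" "span B = (UNIV :: 'a set)"
proof -
  obtain B :: "'a set" where B: "finite B" "cball 0 1 \<subseteq> (\<Union>b\<in>B. ball b (1/2))"
    using compactE_image[OF assms, of "cball 0 1" "\<lambda>b. ball b (1/2)"]
    by (metis (no_types, lifting) UN_I centre_in_ball open_ball subsetI zero_less_divide_iff
        zero_less_numeral zero_less_one)
  have unit_ball: "x \<in> span B" if x: "norm x \<le> 1" for x
  proof -
    have "x \<in> closure (span B)"
      unfolding closure_approachable
    proof (intro allI impI)
      fix d :: real assume "d > 0"
      then obtain n where "(1/2)^n < d" using real_arch_pow_inv[of d "1/2"] by auto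
      moreover obtain v where "v \<in> span B" "norm (x - v) \<le> (1/2)^n"
        using half_net_approximates_unit_ball[OF B(2) x] by blast
      ultimately show "\<exists>v\<in>span B. dist v x < d"
        by (metis dist_commute dist_norm order_le_less_trans)
    qed
    then show ?thesis using closed_span_finite[OF B(1)] by simp
  qed
  have "z \<in> span B" for z
  proof -
    define c where "c = norm z + 1"
    have "c > 0" using norm_ge_zero[of z] unfolding c_def by linarith
    have "norm ((1 / c) *\<^sub>R z) \<le> 1"
      using \<open>c > 0\<close> by (simp add: c_def divide_le_eq_1)
    then have "c *\<^sub>R ((1 / c) *\<^sub>R z) \<in> span B"
      by (intro span_scale unit_ball)
    then show ?thesis using \<open>c > 0\<close> by simp
  qed
  then show ?thesis using that B(1) by blast
qed

lemma compact_unit_ball_if_compact_cball: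
  fixes y :: "'a::real_normed_vector"
  assumes "compact (cball y e)" and "e > 0"
  shows "compact (cball (0::'a) 1)"
proof -
  have "cball (0::'a) 1 = (\<lambda>v. (1/e) *\<^sub>R v) ` ((\<lambda>v. v - y) ` cball y e)"
    using assms(2) by (simp add: cball_translation_subtract[symmetric] cball_scale)
  then show ?thesis
    using assms(1) by (simp add: compact_scaling compact_translation_subtract)
qed

lemma infinite_dim_c_not_compact_cball:
  fixes cs :: "complex \<Rightarrow> 'a::banach \<Rightarrow> 'a" and y :: 'a
  assumes cs: "complex_scalar cs" and "infinite_dim_c cs" and "e > 0"
  shows "\<not> compact (cball y e)"
proof
  assume "compact (cball y e)"
  then obtain B :: "'a set" where B: "finite B" "span B = UNIV"
    using finite_span_UNIV_if_compact_unit_ball compact_unit_ball_if_compact_cball \<open>e > 0\<close>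
    by metis
  have "\<exists>c. v = (\<Sum>b\<in>B. cs (c b) b)" for v
  proof -
    obtain u where "v = (\<Sum>b\<in>B. u b *\<^sub>R b)" using B span_finite[OF B(1)] by blast
    then have "v = (\<Sum>b\<in>B. cs (complex_of_real (u b)) b)"
      using cs unfolding complex_scalar_def by simp
    then show ?thesis by (rule exI[where x = "\<lambda>b. complex_of_real (u b)"])
  qed
  then show False using assms(2) B(1) unfolding infinite_dim_c_def by blast
qed

definition scalar_cone :: "(complex \<Rightarrow> 'a \<Rightarrow> 'a) \<Rightarrow> (complex \<Rightarrow> 'a) \<Rightarrow> complex set \<Rightarrow> 'a set" where
  "scalar_cone cs f K = {cs \<alpha> (f z) | \<alpha> z. z \<in> K}"

lemma scalar_cone_Un: "scalar_cone cs f (K \<union> L) = scalar_cone cs f K \<union> scalar_cone cs f L"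
  unfolding scalar_cone_def by blast

lemma supercyclic_vec_iff_scalar_cone:
  "supercyclic_vec cs S x \<longleftrightarrow> closure (scalar_cone cs (\<lambda>z. S z x) UNIV) = UNIV"
  unfolding supercyclic_vec_def scalar_cone_def by simp

text \<open>Over a compact set where \<open>norm \<circ> f \<ge> m > 0\<close>, a point of norm \<open>< R\<close> in the cone needs a
  scalar of modulus \<open>\<le> R / m\<close>.\<close>

lemma scalar_cone_bounded_part_compact:
  fixes cs :: "complex \<Rightarrow> 'a::banach \<Rightarrow> 'a"
  assumes cs: "complex_scalar cs" and "compact K" and f: "continuous_on K f"
    and nonzero: "\<And>z. z \<in> K \<Longrightarrow> f z \<noteq> 0"
  obtains T where "compact T" "scalar_cone cs f K \<inter> ball 0 R \<subseteq> T"
proof (cases "K = {}")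
  case True
  then show ?thesis using that[of "{}"] by (simp add: scalar_cone_def)
next
  case False
  interpret cs: bounded_bilinear cs by (rule complex_scalar_bounded_bilinear[OF cs])
  obtain z1 where "z1 \<in> K" and z1: "\<And>z. z \<in> K \<Longrightarrow> norm (f z1) \<le> norm (f z)"
    using continuous_attains_inf[OF \<open>compact K\<close> False continuous_on_norm[OF f]] by blast
  define m where "m = norm (f z1)"
  have "m > 0" using nonzero[OF \<open>z1 \<in> K\<close>] by (simp add: m_def)
  define T where "T = (\<lambda>p. cs (fst p) (f (snd p))) ` (cball 0 (R / m) \<times> K)"
  have "continuous_on (cball 0 (R / m) \<times> K) (\<lambda>p. cs (fst p) (f (snd p)))"
    by (intro cs.continuous_on continuous_on_fst continuous_on_id
        continuous_on_compose2[OF f continuous_on_snd]) auto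
  then have "compact T"
    unfolding T_def using \<open>compact K\<close> by (intro compact_continuous_image compact_Times) auto
  moreover have "scalar_cone cs f K \<inter> ball 0 R \<subseteq> T"
  proof
    fix d assume "d \<in> scalar_cone cs f K \<inter> ball 0 R"
    then obtain \<alpha> z where d: "d = cs \<alpha> (f z)" "z \<in> K" "norm d < R"
      unfolding scalar_cone_def by auto
    have "cmod \<alpha> * m \<le> cmod \<alpha> * norm (f z)"
      using z1[OF d(2)] by (simp add: m_def mult_left_mono)
    also have "\<dots> = norm d" using d(1) complex_scalar_norm[OF cs] by simp
    finally have "cmod \<alpha> \<le> R / m" using d(3) \<open>m > 0\<close> by (simp add: pos_le_divide_eq)
    then show "d \<in> T" unfolding T_def using d by (auto intro!: image_eqI[where x = "(\<alpha>, z)"])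
  qed
  ultimately show ?thesis by (rule that)
qed

lemma interior_closure_scalar_cone_empty:
  fixes cs :: "complex \<Rightarrow> 'a::banach \<Rightarrow> 'a"
  assumes cs: "complex_scalar cs" and "infinite_dim_c cs"
    and "compact K" and "continuous_on K f" and "\<And>z. z \<in> K \<Longrightarrow> f z \<noteq> 0"
  shows "interior (closure (scalar_cone cs f K)) = {}"
proof (rule ccontr)
  let ?D = "scalar_cone cs f K"
  assume "interior (closure ?D) \<noteq> {}"
  then obtain y \<epsilon> where "\<epsilon> > 0" and ball: "ball y \<epsilon> \<subseteq> closure ?D"
    by (metis all_not_in_conv interior_subset open_contains_ball open_interior subset_trans)
  obtain T where "compact T" and T: "?D \<inter> ball 0 (norm y + \<epsilon>) \<subseteq> T"
    using scalar_cone_bounded_part_compact[OF assms(1,3-5)] by blast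
  have "cball y (\<epsilon>/2) \<subseteq> ball 0 (norm y + \<epsilon>) \<inter> ball y \<epsilon>"
  proof
    fix p assume "p \<in> cball y (\<epsilon>/2)"
    then have "norm (p - y) \<le> \<epsilon>/2" by (simp add: dist_norm norm_minus_commute)
    moreover have "norm p \<le> norm y + norm (p - y)" by (rule norm_triangle_sub)
    ultimately show "p \<in> ball 0 (norm y + \<epsilon>) \<inter> ball y \<epsilon>"
      using \<open>\<epsilon> > 0\<close> by (simp add: dist_norm norm_minus_commute)
  qed
  also have "\<dots> \<subseteq> ball 0 (norm y + \<epsilon>) \<inter> closure ?D" using ball by blast
  also have "\<dots> \<subseteq> closure (ball 0 (norm y + \<epsilon>) \<inter> ?D)"
    by (rule open_Int_closure_subset) simp
  also have "\<dots> \<subseteq> T"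
    using T \<open>compact T\<close> by (simp add: Int_commute closure_minimal compact_imp_closed)
  finally have "compact (cball y (\<epsilon>/2))"
    using \<open>compact T\<close> by (metis compact_Int_closed closed_cball inf.absorb_iff2)
  then show False
    using infinite_dim_c_not_compact_cball[OF cs assms(2)] \<open>\<epsilon> > 0\<close> by simp
qed

lemma entire_C_reg_group_commute:
  assumes "entire_C_reg_group cs C S"
  shows "C (S z v) = S z (C v)"
proof -
  have "(S (0 + z) \<circ> C) v = (S 0 \<circ> S z) v"
    using assms unfolding entire_C_reg_group_def by metis
  then show ?thesis using assms unfolding entire_C_reg_group_def by simp
qed

lemma entire_C_reg_group_zero_propagates:
  assumes "entire_C_reg_group cs C S" and "S z0 x = 0"
  shows "S z (C x) = 0"
proof -
  have "(S ((z - z0) + z0) \<circ> C) x = (S (z - z0) \<circ> S z0) x"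
    using assms(1) unfolding entire_C_reg_group_def by metis
  moreover have "bounded_linear (S (z - z0))"
    using assms(1) unfolding entire_C_reg_group_def bounded_clinear_op_def by blast
  ultimately show ?thesis using assms(2) by (simp add: linear_simps)
qed

lemma infinite_dim_c_nontrivial:
  fixes cs :: "complex \<Rightarrow> 'a::banach \<Rightarrow> 'a"
  assumes "infinite_dim_c cs"
  obtains v :: 'a where "v \<noteq> 0"
  using assms unfolding infinite_dim_c_def by (metis (full_types) finite.emptyI)

lemma supercyclic_vec_orbit_nonzero:
  fixes cs :: "complex \<Rightarrow> 'a::banach \<Rightarrow> 'a" and v :: 'a
  assumes cs: "complex_scalar cs" and S: "entire_C_reg_group cs C S"
    and dense_C: "closure (range C) = UNIV" and "supercyclic_vec cs S x" and "v \<noteq> 0"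
  shows "S z0 x \<noteq> 0"
proof
  assume "S z0 x = 0"
  have "bounded_clinear_op cs C" using S unfolding entire_C_reg_group_def by blast
  then have C: "bounded_linear C" "\<And>a v. C (cs a v) = cs a (C v)"
    unfolding bounded_clinear_op_def by auto
  have "scalar_cone cs (\<lambda>z. S z x) UNIV \<subseteq> {u. C u = 0}"
  proof
    fix u assume "u \<in> scalar_cone cs (\<lambda>z. S z x) UNIV"
    then obtain \<alpha> z where "u = cs \<alpha> (S z x)" unfolding scalar_cone_def by blast
    then have "C u = cs \<alpha> (S z (C x))"
      using C(2) entire_C_reg_group_commute[OF S] by simp
    also have "\<dots> = 0"
      using entire_C_reg_group_zero_propagates[OF S \<open>S z0 x = 0\<close>]
        bounded_bilinear.zero_right[OF complex_scalar_bounded_bilinear[OF cs]] by simp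
    finally show "u \<in> {u. C u = 0}" by simp
  qed
  moreover have "closed {u. C u = 0}"
    by (intro closed_Collect_eq linear_continuous_on C(1) continuous_on_const)
  ultimately have "closure (scalar_cone cs (\<lambda>z. S z x) UNIV) \<subseteq> {u. C u = 0}"
    by (rule closure_minimal)
  then have "range C \<subseteq> {0}"
    using \<open>supercyclic_vec cs S x\<close> by (auto simp: supercyclic_vec_iff_scalar_cone)
  then have "closure (range C) \<subseteq> {0}" by (rule closure_minimal) simp
  then show False using dense_C \<open>v \<noteq> 0\<close> by blast
qed

theorem theorem4p3:
  fixes cs :: "complex \<Rightarrow> 'a::banach \<Rightarrow> 'a"
    and C :: "'a \<Rightarrow> 'a" and S :: "complex \<Rightarrow> 'a \<Rightarrow> 'a" and x :: 'a
  assumes "complex_scalar cs"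
    and "infinite_dim_c cs"
    and "entire_C_reg_group cs C S"
    and "closure (range C) = UNIV"
    and "supercyclic_vec cs S x"
  shows "(\<forall>z. S z x \<noteq> 0) \<and>
         (\<forall>\<omega>0. closure {cs \<alpha> (S z x) | \<alpha> z. cmod z > cmod \<omega>0} = UNIV)"
proof (intro conjI allI)
  obtain v :: 'a where "v \<noteq> 0" using infinite_dim_c_nontrivial[OF assms(2)] .
  then show nonzero: "S z x \<noteq> 0" for z
    using supercyclic_vec_orbit_nonzero[OF assms(1,3,4,5)] by blast
  fix \<omega>0
  let ?cone = "scalar_cone cs (\<lambda>z. S z x)"
  have "continuous_on UNIV (\<lambda>z. S z x)"
    using assms(1,3) entire_v_continuous unfolding entire_C_reg_group_def by blast
  then have nowhere_dense: "interior (closure (?cone (cball 0 (cmod \<omega>0)))) = {}"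
    using nonzero by (intro interior_closure_scalar_cone_empty[OF assms(1,2)])
      (auto intro: continuous_on_subset)
  have "?cone UNIV = ?cone (cball 0 (cmod \<omega>0)) \<union> ?cone {z. cmod z > cmod \<omega>0}"
    unfolding scalar_cone_Un[symmetric] by (rule arg_cong[where f = ?cone]) auto
  then have "closure (?cone (cball 0 (cmod \<omega>0))) \<union> closure (?cone {z. cmod z > cmod \<omega>0}) = UNIV"
    using assms(5) by (simp add: supercyclic_vec_iff_scalar_cone flip: closure_Un)
  then have "- closure (?cone {z. cmod z > cmod \<omega>0}) \<subseteq> interior (closure (?cone (cball 0 (cmod \<omega>0))))"
    by (intro interior_maximal) auto
  then show "closure {cs \<alpha> (S z x) | \<alpha> z. cmod z > cmod \<omega>0} = UNIV"
    using nowhere_dense by (auto simp: scalar_cone_def)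
qed

end
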